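(* Let $0\le h\le q-2$ and $\lambda_0,\lambda_1\in\mathbb{F}^\times$. For any $y\in A_\infty'$ with $|y|<p^{-h}$, the equation $\big(\mathrm{id}-\lambda_0\lambda_1^{-1}T_{K,0}^{-(q-1)h}\varphi_q\big)(x)=y$ has a unique solution $x\in A_\infty'$ with $|x|<p^{-h}$, given by the convergent series $x=\sum_{n\ge0}\big(\lambda_0\lambda_1^{-1}T_{K,0}^{-(q-1)h}\varphi_q\big)^n(y)$.
   Context: $p$ odd prime, $q=p^f$, $\mathbb{F}$ a finite extension of $\mathbb{F}_p$. Let $A_\infty'=\mathbb{F}((T_{K,0}^{1/p^\infty}))\big\langle\big(T_{K,i}/T_{K,0}^{p^i}\big)^{\pm1/p^\infty},1\le i\le f-1\big\rangle$ (the completed perfect ring obtained from $\mathbb{F}((T_{K,0}))\langle (T_{K,i}/T_{K,0}^{p^i})^{\pm1},1\le i\le f-1\rangle$ with its $T_{K,0}$-adic topology). Let $\varphi$ be the continuous $\mathbb{F}$-linear endomorphism of $A_\infty'$ with $\varphi(T_{K,i})=T_{K,i+1}$ for $0\le i\le f-1$, where $T_{K,f}:=T_{K,0}^q$ (compatibly on $p$-power roots), and $\varphi_q=\varphi^f$. Let $|\cdot|$ be the unique multiplicative norm on $A_\infty'$ inducing its topology with $|T_{K,0}|=p^{-1}$. *)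

theory Defs
  imports Complex_Main "HOL-Computational_Algebra.Primes"
begin

text \<open>
Elements of A'_infty are represented as coefficient functions
x :: (nat => rat) => 'a on exponent vectors e, where e 0 is the exponent of T_{K,0}
and, for 1 <= i <= f-1, e i is the exponent of X_i = T_{K,i} / T_{K,0}^(p^i).  The completed perfect ring is
the set of such functions with, for every bound N, only finitely many nonzero
coefficients whose T_{K,0}-exponent is below N.
\<close>

definition zp_inv :: "nat \<Rightarrow> rat set" where
  "zp_inv p = {r. \<exists>m::int. \<exists>k::nat. r = of_int m / of_nat p ^ k}"

definition valid_exp :: "nat \<Rightarrow> nat \<Rightarrow> (nat \<Rightarrow> rat) \<Rightarrow> bool" where
  "valid_exp p f e \<longleftrightarrow> (\<forall>i\<ge>f. e i = 0) \<and> (\<forall>i<f. e i \<in> zp_inv p)"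

definition Ainf :: "nat \<Rightarrow> nat \<Rightarrow> ((nat \<Rightarrow> rat) \<Rightarrow> 'a::field) set" where
  "Ainf p f = {x. (\<forall>e. x e \<noteq> 0 \<longrightarrow> valid_exp p f e)
                 \<and> (\<forall>N::rat. finite {e. x e \<noteq> 0 \<and> e 0 < N})}"

definition azero :: "(nat \<Rightarrow> rat) \<Rightarrow> 'a::field" where
  "azero = (\<lambda>e. 0)"

definition asub :: "((nat \<Rightarrow> rat) \<Rightarrow> 'a::field) \<Rightarrow> ((nat \<Rightarrow> rat) \<Rightarrow> 'a) \<Rightarrow> ((nat \<Rightarrow> rat) \<Rightarrow> 'a)" where
  "asub x y = (\<lambda>e. x e - y e)"

definition asmult :: "'a::field \<Rightarrow> ((nat \<Rightarrow> rat) \<Rightarrow> 'a) \<Rightarrow> ((nat \<Rightarrow> rat) \<Rightarrow> 'a)" where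
  "asmult c x = (\<lambda>e. c * x e)"

definition amult :: "((nat \<Rightarrow> rat) \<Rightarrow> 'a::field) \<Rightarrow> ((nat \<Rightarrow> rat) \<Rightarrow> 'a) \<Rightarrow> ((nat \<Rightarrow> rat) \<Rightarrow> 'a)" where
  "amult x y = (\<lambda>e. \<Sum>e1\<in>{e1. x e1 \<noteq> 0 \<and> y (\<lambda>i. e i - e1 i) \<noteq> 0}. x e1 * y (\<lambda>i. e i - e1 i))"

definition aT0pow :: "rat \<Rightarrow> ((nat \<Rightarrow> rat) \<Rightarrow> 'a::field)" where
  "aT0pow k = (\<lambda>e. if e = (\<lambda>i. if i = 0 then k else 0) then 1 else 0)"

definition apsum :: "(nat \<Rightarrow> ((nat \<Rightarrow> rat) \<Rightarrow> 'a::field)) \<Rightarrow> nat \<Rightarrow> ((nat \<Rightarrow> rat) \<Rightarrow> 'a)" where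
  "apsum s N = (\<lambda>e. \<Sum>n<N. s n e)"

definition anorm :: "nat \<Rightarrow> ((nat \<Rightarrow> rat) \<Rightarrow> 'a::field) \<Rightarrow> real" where
  "anorm p x = (if x = (\<lambda>e. 0) then 0
     else Sup {real p powr (- real_of_rat (e 0)) | e. x e \<noteq> 0})"

text \<open>On monomials,
  phi(T_0) = T_1 = X_1 T_0^p, phi(X_i) = X_{i+1} X_1^(-p^i) (1 <= i <= f-2),
  phi(X_{f-1}) = T_0^q / T_1^(p^(f-1)) = X_1^(-p^(f-1)),
so phi acts on exponent vectors by the following (bijective) linear map.\<close>
definition phi_exp :: "nat \<Rightarrow> nat \<Rightarrow> (nat \<Rightarrow> rat) \<Rightarrow> (nat \<Rightarrow> rat)" where
  "phi_exp p f e = (\<lambda>j. if j = 0 then of_nat p * e 0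
      else if j = 1 \<and> 2 \<le> f then e 0 - (\<Sum>i\<in>{1..<f}. of_nat p ^ i * e i)
      else if 2 \<le> j \<and> j < f then e (j - 1)
      else 0)"

definition aphi :: "nat \<Rightarrow> nat \<Rightarrow> ((nat \<Rightarrow> rat) \<Rightarrow> 'a::field) \<Rightarrow> ((nat \<Rightarrow> rat) \<Rightarrow> 'a)" where
  "aphi p f x = (\<lambda>e'. \<Sum>e\<in>{e. x e \<noteq> 0 \<and> phi_exp p f e = e'}. x e)"

definition aphiq :: "nat \<Rightarrow> nat \<Rightarrow> ((nat \<Rightarrow> rat) \<Rightarrow> 'a::field) \<Rightarrow> ((nat \<Rightarrow> rat) \<Rightarrow> 'a)" where
  "aphiq p f = (aphi p f ^^ f)"

definition Lop :: "nat \<Rightarrow> nat \<Rightarrow> nat \<Rightarrow> 'a::field \<Rightarrow> ((nat \<Rightarrow> rat) \<Rightarrow> 'a) \<Rightarrow> ((nat \<Rightarrow> rat) \<Rightarrow> 'a)" where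
  "Lop p f h c x = asmult c (amult (aT0pow (- of_nat ((p ^ f - 1) * h))) (aphiq p f x))"

end

theory Submission
  imports Defs
begin

text \<open>
Write v for the T_{K,0}-adic valuation, so that |x| = p^(-v(x)) and |x| < p^(-h) means v(x) > h.
Since phi_q multiplies T_{K,0}-exponents by q and T_{K,0}^(-(q-1)h) shifts them by -(q-1)h,
the operator L = lambda_0 lambda_1^(-1) T_{K,0}^(-(q-1)h) phi_q sends v(x) >= h + d to
v(L x) >= h + q d: it multiplies the excess of the valuation over h by q >= 2.
So if v(y) >= h + delta with delta > 0, then v(L^n y) >= h + (n+1) delta, and the Neumann series
sum_n L^n y converges T_{K,0}-adically to a solution of x - L x = y.  The difference z of two
solutions with v > h satisfies L z = z, which is impossible for z \<noteq> 0 since v(L z) > v(z).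
\<close>

section \<open>Exponents in \<int>[1/p]\<close>

lemma zp_inv_of_int: "of_int m \<in> zp_inv p"
  unfolding zp_inv_def by (rule CollectI, rule exI[of _ m], rule exI[of _ 0]) simp

lemma zp_inv_of_nat: "of_nat m \<in> zp_inv p"
  using zp_inv_of_int[of "int m" p] by simp

lemma zp_inv_add:
  assumes "0 < p" "a \<in> zp_inv p" "b \<in> zp_inv p"
  shows "a + b \<in> zp_inv p"
proof -
  from assms(2) obtain m k where a: "a = of_int m / of_nat p ^ k" unfolding zp_inv_def by auto
  from assms(3) obtain m' k' where b: "b = of_int m' / of_nat p ^ k'" unfolding zp_inv_def by auto
  have "a + b = of_int (m * int p ^ k' + m' * int p ^ k) / of_nat p ^ (k + k')"
    using assms(1) by (simp add: a b field_simps power_add)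
  then show ?thesis unfolding zp_inv_def by blast
qed

lemma zp_inv_mult:
  assumes "a \<in> zp_inv p" "b \<in> zp_inv p"
  shows "a * b \<in> zp_inv p"
proof -
  from assms(1) obtain m k where a: "a = of_int m / of_nat p ^ k" unfolding zp_inv_def by auto
  from assms(2) obtain m' k' where b: "b = of_int m' / of_nat p ^ k'" unfolding zp_inv_def by auto
  have "a * b = of_int (m * m') / of_nat p ^ (k + k')"
    by (simp add: a b power_add)
  then show ?thesis unfolding zp_inv_def by blast
qed

lemma zp_inv_diff:
  assumes "0 < p" "a \<in> zp_inv p" "b \<in> zp_inv p"
  shows "a - b \<in> zp_inv p"
  using zp_inv_add[OF assms(1,2) zp_inv_mult[OF zp_inv_of_int[of "-1"] assms(3)]] by simp

lemma zp_inv_sum: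
  assumes "0 < p" "\<And>i. i \<in> A \<Longrightarrow> g i \<in> zp_inv p"
  shows "sum g A \<in> zp_inv p"
  using assms(2) zp_inv_of_nat[of 0]
  by (induction A rule: infinite_finite_induct) (simp_all add: zp_inv_add[OF assms(1)])

lemma valid_exp_phi_exp:
  assumes "0 < p" "1 \<le> f" "valid_exp p f e"
  shows "valid_exp p f (phi_exp p f e)"
proof -
  have e: "e i \<in> zp_inv p" if "i < f" for i
    using assms(3) that by (simp add: valid_exp_def)
  have "(\<Sum>i\<in>{1..<f}. of_nat p ^ i * e i) \<in> zp_inv p"
    using e by (intro zp_inv_sum[OF assms(1)] zp_inv_mult) (simp_all add: zp_inv_of_nat flip: of_nat_power)
  moreover have "e (i - 1) \<in> zp_inv p" if "2 \<le> i" "i < f" for i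
    using e that by simp
  ultimately show ?thesis
    using assms(2) e[of 0] zp_inv_of_nat[of 0 p] zp_inv_diff[OF assms(1)] zp_inv_mult[OF zp_inv_of_nat]
    by (auto simp: valid_exp_def phi_exp_def)
qed

section \<open>Valuation and norm\<close>

definition val_ge :: "rat \<Rightarrow> ((nat \<Rightarrow> rat) \<Rightarrow> 'a::zero) \<Rightarrow> bool" where
  "val_ge r x \<longleftrightarrow> (\<forall>e. x e \<noteq> 0 \<longrightarrow> r \<le> e 0)"

definition val_gt :: "rat \<Rightarrow> ((nat \<Rightarrow> rat) \<Rightarrow> 'a::zero) \<Rightarrow> bool" where
  "val_gt r x \<longleftrightarrow> (\<forall>e. x e \<noteq> 0 \<longrightarrow> r < e 0)"

lemma val_geD: "val_ge r x \<Longrightarrow> e 0 < r \<Longrightarrow> x e = 0"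
  unfolding val_ge_def by force

lemma val_ge_mono: "val_ge r x \<Longrightarrow> s \<le> r \<Longrightarrow> val_ge s x"
  unfolding val_ge_def by force

lemma val_gt_asub: "val_gt r x \<Longrightarrow> val_gt r z \<Longrightarrow> val_gt r (asub x z)"
  unfolding val_gt_def asub_def by force

lemma Ainf_valid_exp: "x \<in> Ainf p f \<Longrightarrow> x e \<noteq> 0 \<Longrightarrow> valid_exp p f e"
  unfolding Ainf_def by blast

lemma Ainf_finite_below: "x \<in> Ainf p f \<Longrightarrow> finite {e. x e \<noteq> 0 \<and> e 0 < N}"
  unfolding Ainf_def by blast

lemma zero_in_Ainf: "(\<lambda>e. 0) \<in> Ainf p f"
  unfolding Ainf_def by simp

lemma Ainf_support_subset:
  assumes "x \<in> Ainf p f" "z \<in> Ainf p f" "\<And>e. w e \<noteq> 0 \<Longrightarrow> x e \<noteq> 0 \<or> z e \<noteq> 0"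
  shows "w \<in> Ainf p f"
  unfolding Ainf_def
proof (intro CollectI conjI allI impI)
  fix e assume "w e \<noteq> 0"
  then show "valid_exp p f e"
    using assms(3) Ainf_valid_exp[OF assms(1)] Ainf_valid_exp[OF assms(2)] by blast
next
  fix N :: rat
  have "{e. w e \<noteq> 0 \<and> e 0 < N} \<subseteq> {e. x e \<noteq> 0 \<and> e 0 < N} \<union> {e. z e \<noteq> 0 \<and> e 0 < N}"
    using assms(3) by blast
  then show "finite {e. w e \<noteq> 0 \<and> e 0 < N}"
    using Ainf_finite_below[OF assms(1)] Ainf_finite_below[OF assms(2)] by (rule finite_subset[OF _ finite_UnI])
qed

lemma asub_in_Ainf: "x \<in> Ainf p f \<Longrightarrow> z \<in> Ainf p f \<Longrightarrow> asub x z \<in> Ainf p f"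
  unfolding asub_def by (rule Ainf_support_subset[of x p f z]) auto

lemma Ainf_min_exponent:
  assumes "x \<in> Ainf p f" "x e1 \<noteq> 0"
  obtains e where "x e \<noteq> 0" "val_ge (e 0) x"
proof -
  define F where "F = {e. x e \<noteq> 0 \<and> e 0 < e1 0 + 1}"
  have "finite F" "e1 \<in> F"
    unfolding F_def using Ainf_finite_below[OF assms(1)] assms(2) by simp_all
  then obtain e where e: "e \<in> F" "\<And>e'. e' \<in> F \<Longrightarrow> e 0 \<le> e' 0"
    using ex_is_arg_min_if_finite[of F "\<lambda>e. e 0"] by (auto simp: is_arg_min_linorder)
  have "val_ge (e 0) x"
    unfolding val_ge_def
  proof (intro allI impI)
    fix e' assume "x e' \<noteq> 0"
    then show "e 0 \<le> e' 0"
      using e e(2)[of e1] \<open>e1 \<in> F\<close> by (cases "e' 0 < e1 0 + 1") (auto simp: F_def)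
  qed
  with e(1) show ?thesis by (intro that) (simp_all add: F_def)
qed

lemma val_gt_imp_val_ge:
  assumes "x \<in> Ainf p f" "val_gt r x"
  obtains \<delta> where "0 < \<delta>" "val_ge (r + \<delta>) x"
proof (cases "\<exists>e. x e \<noteq> 0")
  case True
  then obtain e where "x e \<noteq> 0" "val_ge (e 0) x" using Ainf_min_exponent[OF assms(1)] by blast
  then show ?thesis using assms(2) that[of "e 0 - r"] by (simp add: val_gt_def)
next
  case False
  then show ?thesis using that[of 1] by (simp add: val_ge_def)
qed

lemma anorm_eq_min_exponent:
  assumes "1 < p" "x e \<noteq> 0" "val_ge (e 0) x"
  shows "anorm p x = real p powr (- real_of_rat (e 0))"
proof -
  have "Sup {real p powr (- real_of_rat (e' 0)) | e'. x e' \<noteq> 0} = real p powr (- real_of_rat (e 0))"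
  proof (rule cSup_eq_maximum)
    show "real p powr (- real_of_rat (e 0)) \<in> {real p powr (- real_of_rat (e' 0)) | e'. x e' \<noteq> 0}"
      using assms(2) by blast
    show "s \<le> real p powr (- real_of_rat (e 0))"
      if "s \<in> {real p powr (- real_of_rat (e' 0)) | e'. x e' \<noteq> 0}" for s
      using that assms(1,3) by (auto simp: val_ge_def of_rat_less_eq)
  qed
  then show ?thesis using assms(2) by (auto simp: anorm_def)
qed

lemma anorm_zero: "anorm p (\<lambda>e. 0) = 0"
  by (simp add: anorm_def)

lemma anorm_nonneg:
  assumes "1 < p" "x \<in> Ainf p f"
  shows "0 \<le> anorm p x"
proof (cases "x = (\<lambda>e. 0)")
  case False
  then obtain e where "x e \<noteq> 0" "val_ge (e 0) x" using Ainf_min_exponent[OF assms(2)] by blast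
  then show ?thesis using assms(1) by (simp add: anorm_eq_min_exponent)
qed (simp add: anorm_zero)

lemma anorm_le_powr:
  assumes "1 < p" "x \<in> Ainf p f" "val_ge r x"
  shows "anorm p x \<le> real p powr (- real_of_rat r)"
proof (cases "x = (\<lambda>e. 0)")
  case False
  then obtain e where "x e \<noteq> 0" "val_ge (e 0) x" using Ainf_min_exponent[OF assms(2)] by blast
  then show ?thesis
    using assms(1,3) by (simp add: anorm_eq_min_exponent val_ge_def of_rat_less_eq)
qed (simp add: anorm_zero)

lemma anorm_less_powr_iff:
  assumes "1 < p" "x \<in> Ainf p f"
  shows "anorm p x < real p powr (- real_of_rat r) \<longleftrightarrow> val_gt r x"
proof (cases "x = (\<lambda>e. 0)")
  case False
  then obtain e where e: "x e \<noteq> 0" "val_ge (e 0) x" using Ainf_min_exponent[OF assms(2)] by blast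
  have "val_gt r x \<longleftrightarrow> r < e 0"
    using e by (auto simp: val_gt_def val_ge_def)
  then show ?thesis
    using assms(1) e by (simp add: anorm_eq_min_exponent of_rat_less)
qed (use assms(1) in \<open>simp add: anorm_zero val_gt_def\<close>)

section \<open>The operator Lop\<close>

lemma aphi_eq_sum:
  assumes "finite G" "{e. x e \<noteq> 0 \<and> phi_exp p f e = e'} \<subseteq> G" "G \<subseteq> {e. phi_exp p f e = e'}"
  shows "aphi p f x e' = sum x G"
  unfolding aphi_def by (rule sum.mono_neutral_left[OF assms(1,2)]) (use assms(3) in auto)

lemma finite_phi_exp_fibre:
  assumes "0 < p" "x \<in> Ainf p f"
  shows "finite {e. x e \<noteq> 0 \<and> phi_exp p f e = e'}"
proof -
  have "{e. x e \<noteq> 0 \<and> phi_exp p f e = e'} \<subseteq> {e. x e \<noteq> 0 \<and> e 0 < e' 0 / of_nat p + 1}"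
    using assms(1) by (auto simp: phi_exp_def)
  then show ?thesis using Ainf_finite_below[OF assms(2)] by (rule finite_subset)
qed

lemma aphi_nonzero_imp:
  assumes "aphi p f x e' \<noteq> 0"
  obtains e where "x e \<noteq> 0" "phi_exp p f e = e'"
  using sum.not_neutral_contains_not_neutral[OF assms[unfolded aphi_def]] that by blast

lemma aphi_in_Ainf:
  assumes "0 < p" "1 \<le> f" "x \<in> Ainf p f"
  shows "aphi p f x \<in> Ainf p f"
  unfolding Ainf_def
proof (intro CollectI conjI allI impI)
  fix e' assume "aphi p f x e' \<noteq> 0"
  then show "valid_exp p f e'"
    by (rule aphi_nonzero_imp) (use valid_exp_phi_exp[OF assms(1,2)] Ainf_valid_exp[OF assms(3)] in blast)
next
  fix N :: rat
  have "{e'. aphi p f x e' \<noteq> 0 \<and> e' 0 < N} \<subseteq> phi_exp p f ` {e. x e \<noteq> 0 \<and> e 0 < N / of_nat p}"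
    using assms(1) by (auto elim!: aphi_nonzero_imp simp: phi_exp_def field_simps)
  then show "finite {e'. aphi p f x e' \<noteq> 0 \<and> e' 0 < N}"
    using Ainf_finite_below[OF assms(3)] finite_subset by blast
qed

lemma aphi_lin_comb:
  assumes "0 < p" "x \<in> Ainf p f" "z \<in> Ainf p f"
  shows "aphi p f (\<lambda>e. a * x e + b * z e) = (\<lambda>e'. a * aphi p f x e' + b * aphi p f z e')"
proof
  fix e'
  define G where "G = {e. x e \<noteq> 0 \<and> phi_exp p f e = e'} \<union> {e. z e \<noteq> 0 \<and> phi_exp p f e = e'}"
  have G: "finite G"
    unfolding G_def using finite_phi_exp_fibre[OF assms(1)] assms(2,3) by blast
  have "aphi p f x e' = sum x G" "aphi p f z e' = sum z G"
    "aphi p f (\<lambda>e. a * x e + b * z e) e' = (\<Sum>e\<in>G. a * x e + b * z e)"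
    by (rule aphi_eq_sum[OF G]; auto simp: G_def)+
  then show "aphi p f (\<lambda>e. a * x e + b * z e) e' = a * aphi p f x e' + b * aphi p f z e'"
    by (simp add: sum.distrib sum_distrib_left)
qed

lemma val_ge_aphi:
  assumes "0 < p" "val_ge r x"
  shows "val_ge (of_nat p * r) (aphi p f x)"
  unfolding val_ge_def
proof (intro allI impI)
  fix e' assume "aphi p f x e' \<noteq> 0"
  then show "of_nat p * r \<le> e' 0"
    by (rule aphi_nonzero_imp) (use assms in \<open>auto simp: val_ge_def phi_exp_def\<close>)
qed

lemma aphi_pow_in_Ainf: "0 < p \<Longrightarrow> 1 \<le> f \<Longrightarrow> x \<in> Ainf p f \<Longrightarrow> (aphi p f ^^ n) x \<in> Ainf p f"
  by (induction n) (simp_all add: aphi_in_Ainf)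

lemma aphi_pow_lin_comb:
  assumes "0 < p" "1 \<le> f" "x \<in> Ainf p f" "z \<in> Ainf p f"
  shows "(aphi p f ^^ n) (\<lambda>e. a * x e + b * z e)
    = (\<lambda>e. a * (aphi p f ^^ n) x e + b * (aphi p f ^^ n) z e)"
proof (induction n)
  case (Suc n)
  then show ?case
    using aphi_lin_comb[OF assms(1) aphi_pow_in_Ainf[OF assms(1,2,3)] aphi_pow_in_Ainf[OF assms(1,2,4)]]
    by simp
qed simp

lemma val_ge_aphi_pow: "0 < p \<Longrightarrow> val_ge r x \<Longrightarrow> val_ge (of_nat p ^ n * r) ((aphi p f ^^ n) x)"
  by (induction n) (simp_all add: val_ge_aphi mult.assoc)

definition ashift :: "rat \<Rightarrow> ((nat \<Rightarrow> rat) \<Rightarrow> 'a) \<Rightarrow> ((nat \<Rightarrow> rat) \<Rightarrow> 'a)" where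
  "ashift k z = (\<lambda>e. z (\<lambda>i. e i - (if i = 0 then k else 0)))"

lemma amult_aT0pow: "amult (aT0pow k) z = ashift k z"
proof
  fix e :: "nat \<Rightarrow> rat"
  define ek where "ek = (\<lambda>i::nat. if i = 0 then k else 0)"
  have support: "{e1. aT0pow k e1 \<noteq> 0 \<and> z (\<lambda>i. e i - e1 i) \<noteq> 0}
    = (if z (\<lambda>i. e i - ek i) \<noteq> 0 then {ek} else {})"
    by (auto simp: aT0pow_def ek_def)
  show "amult (aT0pow k) z e = ashift k z e"
    unfolding amult_def ashift_def support by (auto simp: aT0pow_def ek_def)
qed

lemma ashift_in_Ainf:
  assumes "0 < p" "1 \<le> f" "k \<in> zp_inv p" "z \<in> Ainf p f"
  shows "ashift k z \<in> Ainf p f"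
  unfolding Ainf_def
proof (intro CollectI conjI allI impI)
  fix e assume "ashift k z e \<noteq> 0"
  then have shifted: "valid_exp p f (\<lambda>i. e i - (if i = 0 then k else 0))"
    using Ainf_valid_exp[OF assms(4)] unfolding ashift_def by blast
  show "valid_exp p f e"
    unfolding valid_exp_def
  proof (intro conjI allI impI)
    fix i assume "f \<le> i"
    then have "i \<noteq> 0" "e i - (if i = 0 then k else 0) = 0"
      using assms(2) shifted by (simp_all add: valid_exp_def)
    then show "e i = 0" by simp
  next
    fix i assume "i < f"
    then have "e i - (if i = 0 then k else 0) \<in> zp_inv p"
      using shifted by (simp add: valid_exp_def)
    then show "e i \<in> zp_inv p"
      using zp_inv_add[OF assms(1) _ assms(3), of "e 0 - k"] by (cases "i = 0") simp_all
  qed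
next
  fix N :: rat
  have "{e. ashift k z e \<noteq> 0 \<and> e 0 < N}
    \<subseteq> (\<lambda>e i. e i + (if i = 0 then k else 0)) ` {e. z e \<noteq> 0 \<and> e 0 < N - k}"
  proof
    fix e assume "e \<in> {e. ashift k z e \<noteq> 0 \<and> e 0 < N}"
    then show "e \<in> (\<lambda>e i. e i + (if i = 0 then k else 0)) ` {e. z e \<noteq> 0 \<and> e 0 < N - k}"
      by (intro image_eqI[of _ _ "\<lambda>i. e i - (if i = 0 then k else 0)"]) (auto simp: ashift_def)
  qed
  then show "finite {e. ashift k z e \<noteq> 0 \<and> e 0 < N}"
    using Ainf_finite_below[OF assms(4)] finite_subset by blast
qed

lemma val_ge_ashift: "val_ge r z \<Longrightarrow> val_ge (r + k) (ashift k z)"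
  unfolding val_ge_def ashift_def by force

lemma Lop_eq_ashift:
  "Lop p f h c x = (\<lambda>e. c * ashift (- of_nat ((p ^ f - 1) * h)) ((aphi p f ^^ f) x) e)"
  unfolding Lop_def asmult_def amult_aT0pow aphiq_def ..

lemma Lop_in_Ainf:
  assumes "0 < p" "1 \<le> f" "x \<in> Ainf p f"
  shows "Lop p f h c x \<in> Ainf p f"
proof -
  have A: "ashift (- of_nat ((p ^ f - 1) * h)) ((aphi p f ^^ f) x) \<in> Ainf p f"
    using assms zp_inv_of_int[of "- int ((p ^ f - 1) * h)"]
    by (intro ashift_in_Ainf aphi_pow_in_Ainf) simp_all
  show ?thesis
    unfolding Lop_eq_ashift by (rule Ainf_support_subset[OF A A]) auto
qed

lemma Lop_lin_comb:
  assumes "0 < p" "1 \<le> f" "x \<in> Ainf p f" "z \<in> Ainf p f"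
  shows "Lop p f h c (\<lambda>e. a * x e + b * z e) = (\<lambda>e. a * Lop p f h c x e + b * Lop p f h c z e)"
  unfolding Lop_eq_ashift aphi_pow_lin_comb[OF assms] by (simp add: ashift_def algebra_simps)

lemma val_ge_Lop:
  assumes "0 < p" "val_ge r x"
  shows "val_ge (of_nat (p ^ f) * r - of_nat ((p ^ f - 1) * h)) (Lop p f h c x)"
proof -
  have "val_ge (of_nat p ^ f * r) ((aphi p f ^^ f) x)"
    by (rule val_ge_aphi_pow[OF assms])
  from val_ge_ashift[OF this, of "- of_nat ((p ^ f - 1) * h)"]
  show ?thesis unfolding Lop_eq_ashift val_ge_def by auto
qed

section \<open>T_{K,0}-adically convergent series\<close>

lemma apsum_0: "apsum s 0 = (\<lambda>e. 0)"
  by (simp add: apsum_def)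

lemma apsum_Suc: "apsum s (Suc N) = (\<lambda>e. apsum s N e + s N e)"
  by (simp add: apsum_def)

lemma apsum_in_Ainf: "(\<And>n. s n \<in> Ainf p f) \<Longrightarrow> apsum s N \<in> Ainf p f"
proof (induction N)
  case (Suc N)
  show ?case
    unfolding apsum_Suc by (rule Ainf_support_subset[OF Suc.IH[OF Suc.prems] Suc.prems]) auto
qed (simp add: apsum_0 zero_in_Ainf)

definition val_tendsto_top :: "(nat \<Rightarrow> (nat \<Rightarrow> rat) \<Rightarrow> 'a::zero) \<Rightarrow> bool" where
  "val_tendsto_top s \<longleftrightarrow> (\<forall>B. \<exists>N. \<forall>n\<ge>N. val_ge B (s n))"

text \<open>
If val_tendsto_top s, i.e. s n tends to 0 T_{K,0}-adically,
each coefficient is a finite sum and asuminf s is the limit of the partial sums; otherwise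
infinite sums silently default to 0.
\<close>

definition asuminf :: "(nat \<Rightarrow> (nat \<Rightarrow> rat) \<Rightarrow> 'a::field) \<Rightarrow> (nat \<Rightarrow> rat) \<Rightarrow> 'a" where
  "asuminf s = (\<lambda>e. \<Sum>n | s n e \<noteq> 0. s n e)"

lemma val_tendsto_top_linear:
  assumes "0 < \<delta>" "\<And>n. val_ge (r + of_nat n * \<delta>) (s n)"
  shows "val_tendsto_top s"
  unfolding val_tendsto_top_def
proof
  fix B
  obtain N where N: "B - r < of_nat N * \<delta>" using ex_less_of_nat_mult[OF assms(1)] by blast
  have "val_ge B (s n)" if "N \<le> n" for n
  proof (rule val_ge_mono[OF assms(2)])
    have "of_nat N * \<delta> \<le> of_nat n * \<delta>"
      using that assms(1) by (intro mult_right_mono) simp_all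
    then show "B \<le> r + of_nat n * \<delta>"
      using N by linarith
  qed
  then show "\<exists>N. \<forall>n\<ge>N. val_ge B (s n)" by blast
qed

lemma val_tendsto_top_finite_support:
  assumes "val_tendsto_top s"
  shows "finite {n. s n e \<noteq> 0}"
proof -
  obtain N where "\<And>n. N \<le> n \<Longrightarrow> val_ge (e 0 + 1) (s n)"
    using assms unfolding val_tendsto_top_def by blast
  then have "n < N" if "s n e \<noteq> 0" for n
    using that by (metis val_ge_def not_le less_add_one linorder_not_less)
  then have "{n. s n e \<noteq> 0} \<subseteq> {..<N}"
    by blast
  then show ?thesis by (rule finite_subset) simp
qed

lemma asuminf_nonzero_imp: "asuminf s e \<noteq> 0 \<Longrightarrow> \<exists>n. s n e \<noteq> 0"
  unfolding asuminf_def by (meson sum.not_neutral_contains_not_neutral)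

lemma val_ge_asuminf_tail:
  assumes "val_tendsto_top s" "\<And>n. N \<le> n \<Longrightarrow> val_ge B (s n)"
  shows "val_ge B (asub (asuminf s) (apsum s N))"
  unfolding val_ge_def
proof (intro allI impI)
  fix e assume nonzero: "asub (asuminf s) (apsum s N) e \<noteq> 0"
  obtain K where "\<forall>n\<in>{n. s n e \<noteq> 0}. n < K"
    using val_tendsto_top_finite_support[OF assms(1)] finite_nat_set_iff_bounded by blast
  then have K: "{n. s n e \<noteq> 0} \<subseteq> {..<max K N}" by auto
  have "asuminf s e = (\<Sum>n<max K N. s n e)"
    unfolding asuminf_def by (rule sum.mono_neutral_left) (use K in auto)
  also have "\<dots> = apsum s N e + (\<Sum>n\<in>{N..<max K N}. s n e)"
    unfolding apsum_def by (metis lessThan_atLeast0 max.cobounded2 sum.atLeastLessThan_concat zero_le)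
  finally have "(\<Sum>n\<in>{N..<max K N}. s n e) \<noteq> 0"
    using nonzero by (simp add: asub_def)
  then obtain n where "N \<le> n" "s n e \<noteq> 0"
    by (meson atLeastLessThan_iff sum.not_neutral_contains_not_neutral)
  then show "B \<le> e 0" using assms(2) by (simp add: val_ge_def)
qed

lemma asuminf_in_Ainf:
  assumes "\<And>n. s n \<in> Ainf p f" "val_tendsto_top s"
  shows "asuminf s \<in> Ainf p f"
  unfolding Ainf_def
proof (intro CollectI conjI allI impI)
  fix e assume "asuminf s e \<noteq> 0"
  then show "valid_exp p f e"
    using asuminf_nonzero_imp Ainf_valid_exp[OF assms(1)] by blast
next
  fix B :: rat
  obtain N where "\<And>n. N \<le> n \<Longrightarrow> val_ge B (s n)"
    using assms(2) unfolding val_tendsto_top_def by blast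
  then have tail: "val_ge B (asub (asuminf s) (apsum s N))"
    by (rule val_ge_asuminf_tail[OF assms(2)])
  have "asub (asuminf s) (apsum s N) e = 0" if "e 0 < B" for e
    using tail that by (rule val_geD)
  then have "{e. asuminf s e \<noteq> 0 \<and> e 0 < B} \<subseteq> {e. apsum s N e \<noteq> 0 \<and> e 0 < B}"
    by (auto simp: asub_def)
  then show "finite {e. asuminf s e \<noteq> 0 \<and> e 0 < B}"
    using Ainf_finite_below[OF apsum_in_Ainf[OF assms(1)]] by (rule finite_subset)
qed

lemma powr_neg_linear_LIMSEQ_0:
  fixes b d :: real
  assumes "1 < b" "0 < d"
  shows "(\<lambda>n. b powr (- (a + real n * d))) \<longlonglongrightarrow> 0"
proof -
  have "b powr (- (a + real n * d)) = b powr (- a) * (b powr (- d)) ^ n" for n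
  proof -
    have "(b powr (- d)) ^ n = b powr (- d * real n)"
      using assms(1) by (simp add: powr_realpow[symmetric] powr_powr)
    then show ?thesis
      by (simp add: powr_add[symmetric] algebra_simps)
  qed
  moreover have "(\<lambda>n. b powr (- a) * (b powr (- d)) ^ n) \<longlonglongrightarrow> 0"
    using assms by (intro tendsto_mult_right_zero LIMSEQ_power_zero) (simp_all add: powr_less_one)
  ultimately show ?thesis by simp
qed

section \<open>Contracting operators\<close>

text \<open>The parameter r plays the role of h, and the factor 2 in L_contracting is a lower bound
for q = p^f.\<close>

locale Ainf_contraction =
  fixes p f :: nat and r :: rat and L :: "((nat \<Rightarrow> rat) \<Rightarrow> 'a::field) \<Rightarrow> (nat \<Rightarrow> rat) \<Rightarrow> 'a"
  assumes p_gt_1: "1 < p"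
    and L_in_Ainf: "x \<in> Ainf p f \<Longrightarrow> L x \<in> Ainf p f"
    and L_lin_comb: "x \<in> Ainf p f \<Longrightarrow> z \<in> Ainf p f
      \<Longrightarrow> L (\<lambda>e. a * x e + b * z e) = (\<lambda>e. a * L x e + b * L z e)"
    and L_contracting: "0 \<le> d \<Longrightarrow> val_ge (r + d) x \<Longrightarrow> val_ge (r + 2 * d) (L x)"
begin

lemma L_asub: "x \<in> Ainf p f \<Longrightarrow> z \<in> Ainf p f \<Longrightarrow> L (asub x z) = asub (L x) (L z)"
  using L_lin_comb[of x z 1 "-1"] by (simp add: asub_def)

lemma L_apsum:
  assumes "\<And>n. s n \<in> Ainf p f"
  shows "L (apsum s N) = apsum (\<lambda>n. L (s n)) N"
proof (induction N)
  case 0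
  show ?case using L_lin_comb[OF zero_in_Ainf zero_in_Ainf, of 0 0] by (simp add: apsum_0)
next
  case (Suc N)
  have "L (\<lambda>e. 1 * apsum s N e + 1 * s N e) = (\<lambda>e. 1 * L (apsum s N) e + 1 * L (s N) e)"
    by (rule L_lin_comb[OF apsum_in_Ainf[OF assms] assms])
  then show ?case
    using Suc.IH by (simp add: apsum_Suc)
qed

lemma L_pow_in_Ainf: "y \<in> Ainf p f \<Longrightarrow> (L ^^ n) y \<in> Ainf p f"
  by (induction n) (simp_all add: L_in_Ainf)

lemma val_ge_L_pow:
  assumes "0 \<le> \<delta>" "val_ge (r + \<delta>) y"
  shows "val_ge (r + of_nat (Suc n) * \<delta>) ((L ^^ n) y)"
proof (induction n)
  case (Suc n)
  have "val_ge (r + 2 * (of_nat (Suc n) * \<delta>)) ((L ^^ Suc n) y)"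
    using L_contracting[OF _ Suc.IH] assms(1) by simp
  then show ?case
    by (rule val_ge_mono) (use assms(1) in \<open>simp add: algebra_simps\<close>)
qed (use assms(2) in simp)

lemma apsum_L_pow_telescope:
  assumes "y \<in> Ainf p f"
  shows "asub (apsum (\<lambda>n. (L ^^ n) y) N) (L (apsum (\<lambda>n. (L ^^ n) y) N)) = asub y ((L ^^ N) y)"
proof -
  have L_sum: "L (apsum (\<lambda>n. (L ^^ n) y) N) = apsum (\<lambda>n. (L ^^ Suc n) y) N"
    by (simp add: L_apsum L_pow_in_Ainf assms)
  show ?thesis
  proof
    fix e
    have "(\<Sum>n<N. (L ^^ n) y e - (L ^^ Suc n) y e) = y e - (L ^^ N) y e"
      using sum_lessThan_telescope'[of "\<lambda>n. (L ^^ n) y e" N] by simp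
    then show "asub (apsum (\<lambda>n. (L ^^ n) y) N) (L (apsum (\<lambda>n. (L ^^ n) y) N)) e = asub y ((L ^^ N) y) e"
      unfolding asub_def L_sum by (simp add: apsum_def sum_subtractf)
  qed
qed

lemma fixed_point_eq_0:
  assumes "z \<in> Ainf p f" "val_gt r z" "L z = z"
  shows "z = (\<lambda>e. 0)"
proof (rule ccontr)
  assume "z \<noteq> (\<lambda>e. 0)"
  then obtain e where e: "z e \<noteq> 0" "val_ge (e 0) z"
    using Ainf_min_exponent[OF assms(1)] by blast
  define d where "d = e 0 - r"
  have "0 < d" using e(1) assms(2) by (simp add: d_def val_gt_def)
  moreover have "val_ge (r + 2 * d) z"
    using L_contracting[of d z] e(2) \<open>0 < d\<close> assms(3) by (simp add: d_def)
  then have "r + 2 * d \<le> e 0"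
    using e(1) by (simp add: val_ge_def)
  ultimately show False
    by (simp add: d_def)
qed

lemma solution_unique:
  assumes "x \<in> Ainf p f" "x' \<in> Ainf p f" "val_gt r x" "val_gt r x'"
    and "asub x (L x) = asub x' (L x')"
  shows "x = x'"
proof -
  have "L (asub x x') = asub (L x) (L x')"
    by (rule L_asub[OF assms(1,2)])
  also have "\<dots> = asub x x'"
    using assms(5) by (simp add: asub_def fun_eq_iff algebra_simps)
  finally have "L (asub x x') = asub x x'" .
  then have "asub x x' = (\<lambda>e. 0)"
    by (rule fixed_point_eq_0[OF asub_in_Ainf[OF assms(1,2)] val_gt_asub[OF assms(3,4)]])
  then show ?thesis by (simp add: asub_def fun_eq_iff)
qed

context
  fixes y :: "(nat \<Rightarrow> rat) \<Rightarrow> 'a" and \<delta> :: rat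
  assumes y_in_Ainf: "y \<in> Ainf p f" and \<delta>_pos: "0 < \<delta>" and val_ge_y: "val_ge (r + \<delta>) y"
begin

lemma val_ge_L_pow_y: "val_ge (r + of_nat (Suc n) * \<delta>) ((L ^^ n) y)"
  using val_ge_L_pow \<delta>_pos val_ge_y by simp

lemma val_tendsto_top_L_pow_y: "val_tendsto_top (\<lambda>n. (L ^^ n) y)"
  by (rule val_tendsto_top_linear[where r = r, OF \<delta>_pos], rule val_ge_mono[OF val_ge_L_pow_y])
    (use \<delta>_pos in simp)

lemma neumann_sum_in_Ainf: "asuminf (\<lambda>n. (L ^^ n) y) \<in> Ainf p f"
  by (rule asuminf_in_Ainf[OF L_pow_in_Ainf[OF y_in_Ainf] val_tendsto_top_L_pow_y])

lemma val_ge_neumann_tail: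
  "val_ge (r + of_nat (Suc N) * \<delta>) (asub (asuminf (\<lambda>n. (L ^^ n) y)) (apsum (\<lambda>n. (L ^^ n) y) N))"
proof (rule val_ge_asuminf_tail[OF val_tendsto_top_L_pow_y])
  fix n assume "N \<le> n"
  then have "of_nat (Suc N) * \<delta> \<le> of_nat (Suc n) * \<delta>"
    using \<delta>_pos by (intro mult_right_mono) simp_all
  then show "val_ge (r + of_nat (Suc N) * \<delta>) ((L ^^ n) y)"
    by (intro val_ge_mono[OF val_ge_L_pow_y]) simp
qed

lemma neumann_sum_solves: "asub (asuminf (\<lambda>n. (L ^^ n) y)) (L (asuminf (\<lambda>n. (L ^^ n) y))) = y"
proof
  fix e :: "nat \<Rightarrow> rat"
  define x where "x = asuminf (\<lambda>n. (L ^^ n) y)"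
  define S where "S N = apsum (\<lambda>n. (L ^^ n) y) N" for N
  obtain N where N: "e 0 - r < of_nat N * \<delta>"
    using ex_less_of_nat_mult[OF \<delta>_pos] by blast
  define d where "d = of_nat (Suc N) * \<delta>"
  have "0 \<le> d" "e 0 < r + d"
    using N \<delta>_pos by (simp_all add: d_def algebra_simps)
  have S_in_Ainf: "S N \<in> Ainf p f"
    unfolding S_def by (rule apsum_in_Ainf[OF L_pow_in_Ainf[OF y_in_Ainf]])
  have tail: "val_ge (r + d) (asub x (S N))"
    using val_ge_neumann_tail by (simp add: x_def S_def d_def)
  then have "x e = S N e"
    using val_geD[OF tail, of e] \<open>e 0 < r + d\<close> by (simp add: asub_def)
  moreover have "L x e = L (S N) e"
  proof -
    have L_tail: "val_ge (r + 2 * d) (asub (L x) (L (S N)))"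
      using L_contracting[OF \<open>0 \<le> d\<close> tail] L_asub[OF _ S_in_Ainf] neumann_sum_in_Ainf
      by (simp add: x_def)
    then show ?thesis
      using val_geD[OF L_tail, of e] \<open>0 \<le> d\<close> \<open>e 0 < r + d\<close> by (simp add: asub_def)
  qed
  moreover have "S N e - L (S N) e = y e"
    using fun_cong[OF apsum_L_pow_telescope[OF y_in_Ainf, of N], of e]
      val_geD[OF val_ge_L_pow_y[of N], where e = e] \<open>e 0 < r + d\<close>
    by (simp add: S_def asub_def d_def)
  ultimately show "asub x (L x) e = y e" by (simp add: asub_def x_def)
qed

lemma val_gt_neumann_sum: "val_gt r (asuminf (\<lambda>n. (L ^^ n) y))"
  using val_ge_neumann_tail[of 0] \<delta>_pos by (auto simp: val_ge_def val_gt_def asub_def apsum_0)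

lemma neumann_partial_sums_converge:
  "(\<lambda>N. anorm p (asub (asuminf (\<lambda>n. (L ^^ n) y)) (apsum (\<lambda>n. (L ^^ n) y) N))) \<longlonglongrightarrow> 0"
proof (rule tendsto_sandwich[OF always_eventually always_eventually])
  let ?bound = "\<lambda>N. real p powr (- (real_of_rat r + real (Suc N) * real_of_rat \<delta>))"
  have tail_in_Ainf: "asub (asuminf (\<lambda>n. (L ^^ n) y)) (apsum (\<lambda>n. (L ^^ n) y) N) \<in> Ainf p f" for N
    by (intro asub_in_Ainf neumann_sum_in_Ainf apsum_in_Ainf L_pow_in_Ainf y_in_Ainf)
  show "\<forall>N. 0 \<le> anorm p (asub (asuminf (\<lambda>n. (L ^^ n) y)) (apsum (\<lambda>n. (L ^^ n) y) N))"
    using anorm_nonneg[OF p_gt_1 tail_in_Ainf] by blast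
  show "\<forall>N. anorm p (asub (asuminf (\<lambda>n. (L ^^ n) y)) (apsum (\<lambda>n. (L ^^ n) y) N)) \<le> ?bound N"
    using anorm_le_powr[OF p_gt_1 tail_in_Ainf val_ge_neumann_tail]
    by (simp add: of_rat_add of_rat_mult)
  show "(\<lambda>N. 0) \<longlonglongrightarrow> 0" by simp
  show "?bound \<longlonglongrightarrow> 0"
    using p_gt_1 \<delta>_pos
    by (intro LIMSEQ_Suc[OF powr_neg_linear_LIMSEQ_0[where b = "real p" and d = "real_of_rat \<delta>"]]) simp_all
qed

end

theorem unique_small_solution:
  assumes "y \<in> Ainf p f" "val_gt r y"
  shows "\<exists>x. x \<in> Ainf p f \<and> val_gt r x \<and> asub x (L x) = y
    \<and> (\<forall>x'. x' \<in> Ainf p f \<and> val_gt r x' \<and> asub x' (L x') = y \<longrightarrow> x' = x)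
    \<and> (\<lambda>N. anorm p (asub x (apsum (\<lambda>n. (L ^^ n) y) N))) \<longlonglongrightarrow> 0"
proof -
  obtain \<delta> where \<delta>: "0 < \<delta>" "val_ge (r + \<delta>) y"
    using val_gt_imp_val_ge[OF assms] by blast
  note neumann = neumann_sum_in_Ainf val_gt_neumann_sum neumann_sum_solves neumann_partial_sums_converge
  show ?thesis
    using neumann[OF assms(1) \<delta>] solution_unique by blast
qed

end

lemma Ainf_contraction_Lop:
  assumes "1 < p" "1 \<le> f"
  shows "Ainf_contraction p f (of_nat h) (Lop p f h c)"
proof
  show "x \<in> Ainf p f \<Longrightarrow> Lop p f h c x \<in> Ainf p f" for x
    using assms by (simp add: Lop_in_Ainf)
  show "Lop p f h c (\<lambda>e. a * x e + b * z e) = (\<lambda>e. a * Lop p f h c x e + b * Lop p f h c z e)"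
    if "x \<in> Ainf p f" "z \<in> Ainf p f" for x z a b
    using assms that by (simp add: Lop_lin_comb)
  fix d :: rat and x :: "(nat \<Rightarrow> rat) \<Rightarrow> 'a"
  assume "0 \<le> d" "val_ge (of_nat h + d) x"
  have "p ^ 1 \<le> p ^ f"
    using assms by (intro power_increasing) simp_all
  then have "2 \<le> p ^ f"
    using assms(1) by simp
  then have q: "2 \<le> (of_nat (p ^ f) :: rat)"
    by (metis of_nat_numeral of_nat_le_iff)
  have "val_ge (of_nat (p ^ f) * (of_nat h + d) - of_nat ((p ^ f - 1) * h)) (Lop p f h c x)"
    by (rule val_ge_Lop[OF _ \<open>val_ge (of_nat h + d) x\<close>]) (use assms(1) in simp)
  moreover have "of_nat ((p ^ f - 1) * h) = (of_nat (p ^ f) - 1) * (of_nat h :: rat)"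
    using \<open>2 \<le> p ^ f\<close> by (simp add: of_nat_diff)
  then have "of_nat (p ^ f) * (of_nat h + d) - of_nat ((p ^ f - 1) * h) = of_nat h + of_nat (p ^ f) * d"
    by (simp add: algebra_simps)
  moreover have "2 * d \<le> of_nat (p ^ f) * d"
    using q \<open>0 \<le> d\<close> by (rule mult_right_mono)
  ultimately show "val_ge (of_nat h + 2 * d) (Lop p f h c x)"
    by (metis add_le_cancel_left val_ge_mono)
qed (use assms in simp)

theorem lemma4p6:
  fixes p f h :: nat and l0 l1 :: "'a::field" and y :: "(nat \<Rightarrow> rat) \<Rightarrow> 'a"
  assumes "prime (p::nat)" and "odd p" and "1 \<le> f"
    and "finite (UNIV :: 'a set)" and "of_nat p = (0::'a)"
    and "h \<le> p ^ f - 2"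
    and "l0 \<noteq> 0" and "l1 \<noteq> 0"
    and "y \<in> Ainf p f" and "anorm p y < real p powr (- real h)"
  shows "\<exists>x. x \<in> Ainf p f \<and> anorm p x < real p powr (- real h)
             \<and> asub x (Lop p f h (l0 / l1) x) = y
             \<and> (\<forall>x'. x' \<in> Ainf p f \<and> anorm p x' < real p powr (- real h)
                     \<and> asub x' (Lop p f h (l0 / l1) x') = y \<longrightarrow> x' = x)
             \<and> (\<lambda>N. anorm p (asub x (apsum (\<lambda>n. (Lop p f h (l0 / l1) ^^ n) y) N)))
                 \<longlonglongrightarrow> 0"
proof -
  have p: "1 < p"
    using assms(1) prime_gt_1_nat by blast
  interpret Ainf_contraction p f "of_nat h" "Lop p f h (l0 / l1)"
    using Ainf_contraction_Lop[OF p assms(3)] .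
  have small_iff: "anorm p x < real p powr (- real h) \<longleftrightarrow> val_gt (of_nat h) x"
    if "x \<in> Ainf p f" for x :: "(nat \<Rightarrow> rat) \<Rightarrow> 'a"
    using anorm_less_powr_iff[OF p that, of "of_nat h"] by simp
  obtain x where x: "x \<in> Ainf p f" "val_gt (of_nat h) x" "asub x (Lop p f h (l0 / l1) x) = y"
    "\<forall>x'. x' \<in> Ainf p f \<and> val_gt (of_nat h) x' \<and> asub x' (Lop p f h (l0 / l1) x') = y \<longrightarrow> x' = x"
    "(\<lambda>N. anorm p (asub x (apsum (\<lambda>n. (Lop p f h (l0 / l1) ^^ n) y) N))) \<longlonglongrightarrow> 0"
    using unique_small_solution[OF assms(9)] small_iff[OF assms(9)] assms(10) by blast
  show ?thesis
  proof (rule exI[of _ x], intro conjI)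
    show "anorm p x < real p powr (- real h)"
      using small_iff[OF x(1)] x(2) by simp
    show "\<forall>x'. x' \<in> Ainf p f \<and> anorm p x' < real p powr (- real h)
      \<and> asub x' (Lop p f h (l0 / l1) x') = y \<longrightarrow> x' = x"
      using x(4) small_iff by blast
  qed (fact x)+
qed

end
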